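(* Let $k\ge 1$ and $P\subseteq\{0,1\}^k$. If $P\subseteq\operatorname{Ham}_k(\{0,k\})$, then $O_{\operatorname{Maj}}(P)=P$. Otherwise, if $P=\operatorname{Ham}_k(S)$ for some $S\subseteq\{0,\dots,k\}$ with $S\setminus\{0,k\}$ nonempty, then $O_{\operatorname{Maj}}(P)=\operatorname{Ham}_k\big(\{0,\dots,k\}\cap\{2\min S-k+1,\dots,2\max S-1\}\big)$.
   Context: $\operatorname{Ham}_k(S)=\{x\in\{0,1\}^k:|x|\in S\}$ with $|x|$ the Hamming weight. For odd $L$, $\operatorname{Maj}_L(x)=1$ iff $\sum_{i=1}^Lx_i>L/2$. For $f:\{0,1\}^L\to\{0,1\}$ and $P\subseteq\{0,1\}^k$, $O_f(P)=\{x\in\{0,1\}^k:\exists x^{(1)},\dots,x^{(L)}\in P\text{ with }x_i=f(x^{(1)}_i,\dots,x^{(L)}_i)\ \forall i\in[k]\}$. $O_{\operatorname{Maj}}(P)=\bigcup_{L\text{ odd}}O_{\operatorname{Maj}_L}(P)$. *)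

theory Defs
  imports Main
begin

text \<open>Points of the Boolean cube {0,1}^k are bool lists of length k (True = 1).\<close>

definition cube :: "nat \<Rightarrow> bool list set" where
  "cube k = {x. length x = k}"

definition hweight :: "bool list \<Rightarrow> nat" where
  "hweight x = count_list x True"

definition Ham :: "nat \<Rightarrow> nat set \<Rightarrow> bool list set" where
  "Ham k S = {x \<in> cube k. hweight x \<in> S}"

definition Maj :: "bool list \<Rightarrow> bool" where
  "Maj ys = (2 * count_list ys True > length ys)"

text \<open>O_f(P) for f of arity L, applied coordinatewise to L (not necessarily distinct) points of P.\<close>
definition Ofun :: "nat \<Rightarrow> (bool list \<Rightarrow> bool) \<Rightarrow> nat \<Rightarrow> bool list set \<Rightarrow> bool list set" where
  "Ofun L f k P = {x \<in> cube k. \<exists>xs. length xs = L \<and> set xs \<subseteq> P \<and>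
      (\<forall>i<k. x ! i = f (map (\<lambda>y. y ! i) xs))}"

definition OMaj :: "nat \<Rightarrow> bool list set \<Rightarrow> bool list set" where
  "OMaj k P = (\<Union>L\<in>{L. odd L}. Ofun L Maj k P)"

end

theory Submission
  imports Defs "HOL-Combinatorics.Permutations"
begin

text \<open>
  The layers \<open>Ham k S\<close> are invariant under permuting coordinates, and coordinatewise
  majority commutes with such permutations, so \<open>O_Maj(Ham k S)\<close> is a union of layers and
  it suffices to decide which weights \<open>w\<close> occur. Upper bound by double counting: each of the \<open>w\<close> ones of an output
  of \<open>Maj_L\<close> needs \<open>(L+1)/2\<close> ones in its column, while the inputs have at most
  \<open>L \<cdot> max S\<close> ones in total, so \<open>w < 2 max S\<close>; dually \<open>k - w < 2 (k - min S)\<close>.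
  Lower bound by explicit inputs: the \<open>n\<close> cyclic shifts of \<open>h\<close> ones inside a block of
  length \<open>n\<close> put exactly \<open>h\<close> ones into every column of the block, so for odd \<open>n\<close> their
  majority fills the block iff \<open>2h > n\<close>. Such circulant rows, padded by a common prefix
  and mixed with copies of a prefix point of weight \<open>min S\<close> or \<open>max S\<close>, reach every
  weight in the range. If all points of \<open>P\<close> are constant, every column of inputs is the
  same list, so the output equals one of the inputs.
\<close>

lemma count_list_conv_card: "count_list xs v = card {i. i < length xs \<and> xs ! i = v}"
  by (simp add: count_list_eq_length_filter length_filter_conv_card eq_commute)

lemma count_list_False_add_True: "count_list xs False + count_list xs True = length xs"
  by (induction xs) auto

lemma mset_eq_bool_list:
  "length x = length z \<Longrightarrow> count_list x True = count_list z True \<Longrightarrow> mset x = mset z"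
proof (intro multiset_eqI)
  fix b
  assume "length x = length z" "count_list x True = count_list z True"
  then show "count (mset x) b = count (mset z) b"
    using count_list_False_add_True[of x] count_list_False_add_True[of z]
    by (cases b) (auto simp: count_mset)
qed

lemma Maj_in_set: "ys \<noteq> [] \<Longrightarrow> Maj ys \<in> set ys"
  using count_list_False_add_True[of ys] count_list_0_iff[of ys False] count_list_0_iff[of ys True]
  by (cases "Maj ys") (auto simp: Maj_def)

lemma length_less_count_list_Maj:
  "odd (length ys) \<Longrightarrow> length ys < 2 * count_list ys (Maj ys)"
proof (cases "Maj ys")
  case False
  assume "odd (length ys)"
  then have "2 * count_list ys True \<noteq> length ys" by (metis dvd_triv_left)
  with False show ?thesis
    using count_list_False_add_True[of ys] by (simp add: Maj_def)
qed (simp add: Maj_def)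

lemma Ofun_Maj_subset_OMaj: "odd L \<Longrightarrow> Ofun L Maj k P \<subseteq> OMaj k P"
  unfolding OMaj_def by blast

lemma subset_OMaj: "P \<subseteq> cube k \<Longrightarrow> P \<subseteq> OMaj k P"
proof
  fix x assume "P \<subseteq> cube k" "x \<in> P"
  then have "x \<in> Ofun 1 Maj k P"
    by (auto simp: Ofun_def Maj_def split: if_splits intro!: exI[of _ "[x]"])
  then show "x \<in> OMaj k P" using Ofun_Maj_subset_OMaj[of 1] by auto
qed

lemma Ham_0_k_subset_constants: "Ham k {0, k} \<subseteq> range (replicate k)"
proof
  fix x assume "x \<in> Ham k {0, k}"
  then have "length x = k" and "count_list x True = 0 \<or> count_list x False = 0"
    using count_list_False_add_True[of x] by (auto simp: Ham_def cube_def hweight_def)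
  then have "x = replicate k False \<or> x = replicate k True"
    by (auto simp: count_list_0_iff intro!: replicate_eqI)
  then show "x \<in> range (replicate k)" by blast
qed

lemma OMaj_subset_of_constants:
  assumes "0 < k" and "P \<subseteq> range (replicate k)"
  shows "OMaj k P \<subseteq> P"
proof
  fix x assume "x \<in> OMaj k P"
  then obtain L xs where "odd L" "length xs = L" "set xs \<subseteq> P" and "length x = k"
    and x: "\<forall>i<k. x ! i = Maj (map (\<lambda>y. y ! i) xs)"
    by (auto simp: OMaj_def Ofun_def cube_def)
  define bs where "bs = map (\<lambda>y. y ! 0) xs"
  have const: "y = replicate k (y ! 0)" if "y \<in> set xs" for y
    using that \<open>set xs \<subseteq> P\<close> assms by auto
  have x_const: "x = replicate k (Maj bs)"
  proof (rule replicate_eqI)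
    fix b assume "b \<in> set x"
    then obtain i where "i < k" "b = x ! i" using \<open>length x = k\<close> by (auto simp: in_set_conv_nth)
    moreover have "map (\<lambda>y. y ! i) xs = bs" if "i < k" for i
      unfolding bs_def using const that \<open>0 < k\<close> by (intro map_cong) (metis nth_replicate)+
    ultimately show "b = Maj bs" using x by simp
  qed fact
  have "xs \<noteq> []" using \<open>odd L\<close> \<open>length xs = L\<close> by auto
  then have "Maj bs \<in> set bs" using Maj_in_set[of bs] by (simp add: bs_def)
  then obtain y where "y \<in> set xs" "y ! 0 = Maj bs" by (auto simp: bs_def)
  then have "x = replicate k (y ! 0)" using x_const by simp
  also have "\<dots> = y" using const[OF \<open>y \<in> set xs\<close>] by (rule sym)
  finally show "x \<in> P" using \<open>y \<in> set xs\<close> \<open>set xs \<subseteq> P\<close> by auto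
qed

lemma sum_count_list_columns:
  assumes "\<forall>y\<in>set xs. length y = k"
  shows "(\<Sum>i<k. count_list (map (\<lambda>y. y ! i) xs) v) = (\<Sum>y\<leftarrow>xs. count_list y v)"
  using assms
proof (induction xs)
  case (Cons y xs)
  have "(\<Sum>i<k. count_list (map (\<lambda>y. y ! i) (y # xs)) v)
      = (\<Sum>i<k. of_bool (y ! i = v) + count_list (map (\<lambda>y. y ! i) xs) v)"
    by (intro sum.cong) auto
  also have "\<dots> = (\<Sum>i<k. of_bool (y ! i = v)) + (\<Sum>i<k. count_list (map (\<lambda>y. y ! i) xs) v)"
    by (rule sum.distrib)
  also have "\<dots> = count_list y v + (\<Sum>y\<leftarrow>xs. count_list y v)"
    using Cons by (simp add: count_list_conv_card Int_def lessThan_def)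
  finally show ?case by simp
qed simp

lemma count_list_Ofun_Maj_less:
  assumes x: "x \<in> Ofun L Maj k P" and "odd L" and "P \<subseteq> cube k"
    and bound: "\<forall>y\<in>P. count_list y v \<le> B" and "0 < B"
  shows "count_list x v < 2 * B"
proof -
  obtain xs where xs: "length xs = L" "set xs \<subseteq> P" "\<forall>i<k. x ! i = Maj (map (\<lambda>y. y ! i) xs)"
    and "length x = k" using x by (auto simp: Ofun_def cube_def)
  have "(L + 1) * count_list x v = (\<Sum>i<k. of_bool (x ! i = v) * (L + 1))"
    using \<open>length x = k\<close>
    by (subst sum_of_bool_mult_eq) (simp_all add: count_list_conv_card Int_def lessThan_def)
  also have "\<dots> \<le> (\<Sum>i<k. 2 * count_list (map (\<lambda>y. y ! i) xs) v)"
  proof (intro sum_mono)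
    fix i assume "i \<in> {..<k}"
    then have "L < 2 * count_list (map (\<lambda>y. y ! i) xs) (x ! i)"
      using length_less_count_list_Maj[of "map (\<lambda>y. y ! i) xs"] xs \<open>odd L\<close> by simp
    then show "of_bool (x ! i = v) * (L + 1) \<le> 2 * count_list (map (\<lambda>y. y ! i) xs) v"
      by (cases "x ! i = v") auto
  qed
  also have "\<dots> = 2 * (\<Sum>y\<leftarrow>xs. count_list y v)"
    using xs(2) \<open>P \<subseteq> cube k\<close>
    by (simp add: sum_distrib_left[symmetric] sum_count_list_columns subset_iff cube_def)
  also have "\<dots> \<le> 2 * (L * B)"
    using sum_list_mono[of xs "\<lambda>y. count_list y v" "\<lambda>_. B"] xs bound
    by (auto simp: sum_list_triv)
  also have "\<dots> < (L + 1) * (2 * B)"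
    using \<open>0 < B\<close> by simp
  finally show ?thesis
    by (metis mult_less_cancel1)
qed

lemma OMaj_Ham_subset:
  assumes "S \<subseteq> {0..k}" and "s \<in> S" "0 < s" "s < k"
  shows "OMaj k (Ham k S) \<subseteq>
    Ham k {w. w \<le> k \<and> 2 * int (Min S) - int k + 1 \<le> int w \<and> int w \<le> 2 * int (Max S) - 1}"
proof
  fix x assume "x \<in> OMaj k (Ham k S)"
  then obtain L where "odd L" and x: "x \<in> Ofun L Maj k (Ham k S)" by (auto simp: OMaj_def)
  have "finite S" using assms(1) finite_subset by blast
  then have Min: "Min S \<le> hweight y" and Max: "hweight y \<le> Max S" if "y \<in> Ham k S" for y
    using that by (auto simp: Ham_def)
  have "Min S \<le> s" "s \<le> Max S" using \<open>finite S\<close> assms(2) by auto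
  have cube: "Ham k S \<subseteq> cube k" by (auto simp: Ham_def)
  have "count_list x True < 2 * Max S"
    using Max \<open>s \<le> Max S\<close> assms(3)
    by (intro count_list_Ofun_Maj_less[OF x \<open>odd L\<close> cube]) (auto simp: hweight_def)
  moreover have "count_list x False < 2 * (k - Min S)"
  proof (intro count_list_Ofun_Maj_less[OF x \<open>odd L\<close> cube] ballI)
    fix y assume "y \<in> Ham k S"
    then show "count_list y False \<le> k - Min S"
      using Min[of y] count_list_False_add_True[of y] by (auto simp: Ham_def cube_def hweight_def)
  qed (use \<open>Min S \<le> s\<close> assms(4) in simp)
  moreover have "length x = k" using x by (simp add: Ofun_def cube_def)
  ultimately show
    "x \<in> Ham k {w. w \<le> k \<and> 2 * int (Min S) - int k + 1 \<le> int w \<and> int w \<le> 2 * int (Max S) - 1}"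
    using count_list_False_add_True[of x] by (auto simp: Ham_def cube_def hweight_def)
qed

lemma permute_list_in_Ham:
  "p permutes {..<k} \<Longrightarrow> x \<in> Ham k S \<Longrightarrow> permute_list p x \<in> Ham k S"
  by (auto simp: Ham_def cube_def hweight_def count_mset[symmetric])

lemma permute_list_in_Ofun:
  assumes p: "p permutes {..<k}" and closed: "\<And>y. y \<in> P \<Longrightarrow> permute_list p y \<in> P"
    and "P \<subseteq> cube k" and z: "z \<in> Ofun L f k P"
  shows "permute_list p z \<in> Ofun L f k P"
proof -
  obtain xs where xs: "length xs = L" "set xs \<subseteq> P" "\<forall>i<k. z ! i = f (map (\<lambda>y. y ! i) xs)"
    and "length z = k" using z by (auto simp: Ofun_def cube_def)
  have "permute_list p z ! i = f (map (\<lambda>y. y ! i) (map (permute_list p) xs))" if "i < k" for i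
  proof -
    have "\<forall>y\<in>set xs. permute_list p y ! i = y ! p i"
      using xs(2) \<open>P \<subseteq> cube k\<close> p \<open>i < k\<close> by (auto simp: cube_def permute_list_nth)
    then have "map (\<lambda>y. y ! i) (map (permute_list p) xs) = map (\<lambda>y. y ! p i) xs" by simp
    moreover have "p i < k" using permutes_in_image[OF p] \<open>i < k\<close> by simp
    ultimately show ?thesis
      using xs(3) p \<open>i < k\<close> \<open>length z = k\<close> by (simp add: permute_list_nth del: map_map)
  qed
  then show ?thesis
    using xs(1,2) closed \<open>length z = k\<close>
    by (auto simp: Ofun_def cube_def subset_iff intro!: exI[of _ "map (permute_list p) xs"])
qed

lemma OMaj_Ham_closed_same_weight:
  assumes "z \<in> OMaj k (Ham k S)" and "x \<in> cube k" and "hweight x = hweight z"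
  shows "x \<in> OMaj k (Ham k S)"
proof -
  obtain L where "odd L" and z: "z \<in> Ofun L Maj k (Ham k S)" using assms(1) by (auto simp: OMaj_def)
  have "length z = k" using z by (simp add: Ofun_def cube_def)
  then have "mset x = mset z"
    using assms(2,3) by (intro mset_eq_bool_list) (auto simp: cube_def hweight_def)
  then obtain p where p: "p permutes {..<k}" "permute_list p z = x"
    using \<open>length z = k\<close> by (metis mset_eq_permutation)
  have "x \<in> Ofun L Maj k (Ham k S)"
    using permute_list_in_Ofun[OF p(1) permute_list_in_Ham[OF p(1)] _ z] p(2)
    by (auto simp: Ham_def)
  then show ?thesis using Ofun_Maj_subset_OMaj[OF \<open>odd L\<close>] by auto
qed

definition point :: "nat \<Rightarrow> (nat \<Rightarrow> bool) \<Rightarrow> bool list" where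
  "point k f = map f [0..<k]"

lemma point_in_cube: "point k f \<in> cube k"
  by (simp add: point_def cube_def)

lemma count_list_map_upt: "count_list (map f [0..<n]) True = card {j. j < n \<and> f j}"
  by (simp add: count_list_conv_card cong: conj_cong)

lemma hweight_point: "hweight (point k f) = card {i. i < k \<and> f i}"
  by (simp add: hweight_def point_def count_list_map_upt)

lemma hweight_prefix_point: "r \<le> k \<Longrightarrow> hweight (point k (\<lambda>i. i < r)) = r"
proof -
  assume "r \<le> k"
  then have "{i. i < k \<and> i < r} = {..<r}" by auto
  then show ?thesis by (simp add: hweight_point)
qed

lemma point_in_Ham_iff: "point k f \<in> Ham k S \<longleftrightarrow> card {i. i < k \<and> f i} \<in> S"
  by (simp add: Ham_def point_in_cube hweight_point)

lemma point_in_OMaj: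
  assumes "odd (a + b)"
    and "\<And>j. j < a \<Longrightarrow> point k (G j) \<in> P" and "\<And>j. j < b \<Longrightarrow> point k (H j) \<in> P"
    and "\<And>i. i < k \<Longrightarrow>
      g i \<longleftrightarrow> a + b < 2 * (card {j. j < a \<and> G j i} + card {j. j < b \<and> H j i})"
  shows "point k g \<in> OMaj k P"
proof -
  define xs where "xs = map (\<lambda>j. point k (G j)) [0..<a] @ map (\<lambda>j. point k (H j)) [0..<b]"
  have "point k g ! i = Maj (map (\<lambda>y. y ! i) xs)" if "i < k" for i
  proof -
    have "map (\<lambda>y. y ! i) xs = map (\<lambda>j. G j i) [0..<a] @ map (\<lambda>j. H j i) [0..<b]"
      using that by (simp add: xs_def point_def)
    then show ?thesis
      using that assms(4)[OF that] by (simp add: point_def Maj_def count_list_map_upt)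
  qed
  moreover have "length xs = a + b" and "set xs \<subseteq> P"
    using assms(2,3) by (auto simp: xs_def)
  ultimately have "point k g \<in> Ofun (a + b) Maj k P"
    unfolding Ofun_def using point_in_cube by blast
  then show ?thesis using Ofun_Maj_subset_OMaj[OF assms(1)] by auto
qed

lemma inj_on_rotate: "inj_on (\<lambda>j. (q + j) mod n) {..<n::nat}"
proof (rule inj_onI)
  fix x y assume "x \<in> {..<n}" "y \<in> {..<n}" and eq: "(q + x) mod n = (q + y) mod n"
  from eq have "x mod n = y mod n"
    by (auto simp: nat_mod_eq_iff)
  then show "x = y" using \<open>x \<in> {..<n}\<close> \<open>y \<in> {..<n}\<close> by simp
qed

lemma card_rotate_less:
  assumes "h \<le> n"
  shows "card {j. j < n \<and> (q + j) mod n < h} = h"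
proof (cases "n = 0")
  case False
  define f where "f = (\<lambda>j. (q + j) mod n)"
  have "f ` {..<n} = {..<n}"
    using inj_on_rotate False by (intro endo_inj_surj) (auto simp: f_def)
  then have image: "f ` {j. j < n \<and> f j < h} = {..<h}"
    using assms by (auto simp: image_iff)
  have "inj_on f {j. j < n \<and> f j < h}"
    using inj_on_rotate[of q n, folded f_def] by (rule inj_on_subset) auto
  from card_image[OF this] show ?thesis
    unfolding image by (simp add: f_def)
qed (use assms in simp)

definition cyclic_row :: "nat \<Rightarrow> nat \<Rightarrow> nat \<Rightarrow> nat \<Rightarrow> nat \<Rightarrow> bool" where
  "cyclic_row c n h j p \<longleftrightarrow> p < c \<or> (c \<le> p \<and> p < c + n \<and> (p - c + j) mod n < h)"

lemma card_cyclic_row_column: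
  assumes "h \<le> n"
  shows "card {j. j < n \<and> cyclic_row c n h j p} = (if p < c then n else if p < c + n then h else 0)"
proof -
  have "c \<le> p \<Longrightarrow> p < c + n \<Longrightarrow> card {j. j < n \<and> cyclic_row c n h j p} = h"
    using card_rotate_less[OF assms, of "p - c"] by (simp add: cyclic_row_def)
  then show ?thesis by (auto simp: cyclic_row_def)
qed

lemma card_cyclic_row:
  assumes "c + n \<le> k" and "h \<le> n"
  shows "card {p. p < k \<and> cyclic_row c n h j p} = c + h"
proof -
  define B where "B = {q. q < n \<and> (j + q) mod n < h}"
  have "{p. p < k \<and> cyclic_row c n h j p} = {..<c} \<union> (+) c ` B"
  proof (intro equalityI subsetI)
    fix p assume p: "p \<in> {p. p < k \<and> cyclic_row c n h j p}"
    show "p \<in> {..<c} \<union> (+) c ` B"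
    proof (cases "p < c")
      case False
      then have "p = c + (p - c)" and "p - c \<in> B"
        using p by (auto simp: B_def cyclic_row_def add.commute)
      then show ?thesis by blast
    qed simp
  qed (use assms(1) in \<open>auto simp: B_def cyclic_row_def add.commute\<close>)
  moreover have "card ((+) c ` B) = h"
    unfolding B_def
    using card_rotate_less[OF assms(2)] by (simp add: card_image)
  moreover have "finite B" and "{..<c} \<inter> (+) c ` B = {}"
    by (auto simp: B_def)
  ultimately show ?thesis
    by (simp add: card_Un_disjoint)
qed

text \<open>The inputs are \<open>a\<close> copies of the prefix point of weight \<open>r\<close> and the \<open>n\<close> circulant
  rows; the last hypothesis evaluates their majority column by column.\<close>

lemma prefix_point_in_OMaj_Ham:
  assumes "odd (a + n)" and "r \<le> k" "r \<in> S" and "c + n \<le> k" "h \<le> n" "c + h \<in> S"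
    and "\<And>p. p < k \<Longrightarrow> p < w \<longleftrightarrow>
      a + n < 2 * ((if p < r then a else 0) + (if p < c then n else if p < c + n then h else 0))"
  shows "point k (\<lambda>p. p < w) \<in> OMaj k (Ham k S)"
proof (rule point_in_OMaj[where G = "\<lambda>_ p. p < r" and H = "cyclic_row c n h"])
  show "point k (\<lambda>p. p < r) \<in> Ham k S" for j
    using \<open>r \<le> k\<close> \<open>r \<in> S\<close> by (simp add: Ham_def point_in_cube hweight_prefix_point)
  show "point k (cyclic_row c n h j) \<in> Ham k S" for j
    using assms(4-6) by (simp add: point_in_Ham_iff card_cyclic_row)
  show "p < w \<longleftrightarrow> a + n < 2 * (card {j. j < a \<and> p < r} + card {j. j < n \<and> cyclic_row c n h j p})"
    if "p < k" for p
    using assms(7)[OF that] by (simp add: card_cyclic_row_column[OF \<open>h \<le> n\<close>])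
qed (fact assms(1))

lemma prefix_point_in_OMaj_Ham_range:
  assumes "S \<subseteq> {0..k}" and "s \<in> S" "0 < s" "s < k" and "w \<le> k"
    and "2 * int (Min S) - int k + 1 \<le> int w" "int w \<le> 2 * int (Max S) - 1"
  shows "point k (\<lambda>p. p < w) \<in> OMaj k (Ham k S)"
proof -
  define m where "m = Min S"
  define M where "M = Max S"
  have "finite S" using assms(1) finite_subset by blast
  then have "m \<in> S" "M \<in> S" "m \<le> s" "s \<le> M"
    using assms(2) by (auto simp: m_def M_def intro: Min_in Max_in)
  moreover have "M \<le> k" using \<open>M \<in> S\<close> assms(1) by auto
  moreover have "2 * m < k + w" "w + 1 \<le> 2 * M"
    using assms(6,7) by (auto simp: m_def M_def)
  ultimately consider "M \<le> w" | "w \<le> m" | "m < w" "w \<le> s" | "s < w" "w < M"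
    by linarith
  \<comment> \<open>Outside \<open>[min S, max S]\<close> circulant rows of weight \<open>max S\<close> resp. \<open>min S\<close> suffice;
    inside, rows of the middle weight \<open>s\<close> are outvoted or supported by prefix points.\<close>
  then show ?thesis
  proof cases
    case 1
    show ?thesis
      by (rule prefix_point_in_OMaj_Ham[where a = 0 and r = M and c = "2 * M - w - 1"
            and n = "2 * (w - M) + 1" and h = "w - M + 1"])
        (use 1 \<open>M \<in> S\<close> \<open>M \<le> k\<close> \<open>w + 1 \<le> 2 * M\<close> \<open>w \<le> k\<close> in auto)
  next
    case 2
    show ?thesis
      by (rule prefix_point_in_OMaj_Ham[where a = 0 and r = m and c = w
            and n = "2 * (m - w) + 1" and h = "m - w"])
        (use 2 \<open>m \<in> S\<close> \<open>m \<le> s\<close> \<open>2 * m < k + w\<close> assms(4) in auto)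
  next
    case 3
    show ?thesis
      by (rule prefix_point_in_OMaj_Ham[where a = "k - w - 1" and r = m and c = w
            and n = "k - w" and h = "s - w"])
        (use 3 \<open>m \<in> S\<close> assms(2,4) in auto)
  next
    case 4
    show ?thesis
      by (rule prefix_point_in_OMaj_Ham[where a = "w - 1" and r = M and c = 0
            and n = w and h = s])
        (use 4 \<open>M \<in> S\<close> \<open>M \<le> k\<close> assms(2,3) in auto)
  qed
qed

lemma Ham_subset_OMaj:
  assumes "S \<subseteq> {0..k}" and "s \<in> S" "0 < s" "s < k"
  shows "Ham k {w. w \<le> k \<and> 2 * int (Min S) - int k + 1 \<le> int w \<and> int w \<le> 2 * int (Max S) - 1}
    \<subseteq> OMaj k (Ham k S)"
proof
  fix x
  assume "x \<in> Ham k {w. w \<le> k \<and> 2 * int (Min S) - int k + 1 \<le> int w \<and> int w \<le> 2 * int (Max S) - 1}"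
  then have "x \<in> cube k" and "hweight x \<le> k"
    and "2 * int (Min S) - int k + 1 \<le> int (hweight x)" "int (hweight x) \<le> 2 * int (Max S) - 1"
    by (auto simp: Ham_def)
  then have prefix: "point k (\<lambda>p. p < hweight x) \<in> OMaj k (Ham k S)"
    by (intro prefix_point_in_OMaj_Ham_range[OF assms])
  have "hweight x = hweight (point k (\<lambda>p. p < hweight x))"
    using \<open>hweight x \<le> k\<close> by (simp add: hweight_prefix_point)
  with prefix \<open>x \<in> cube k\<close> show "x \<in> OMaj k (Ham k S)"
    by (rule OMaj_Ham_closed_same_weight)
qed

theorem claim4p7:
  fixes k :: nat and P :: "bool list set"
  assumes "k \<ge> 1" and "P \<subseteq> cube k"
  shows "(P \<subseteq> Ham k {0, k} \<longrightarrow> OMaj k P = P) \<and>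
    (\<forall>S. S \<subseteq> {0..k} \<and> S - {0, k} \<noteq> {} \<and> P = Ham k S \<longrightarrow>
       OMaj k P = Ham k {w. w \<le> k \<and> 2 * int (Min S) - int k + 1 \<le> int w
                                   \<and> int w \<le> 2 * int (Max S) - 1})"
proof (intro conjI impI allI)
  assume "P \<subseteq> Ham k {0, k}"
  then have "P \<subseteq> range (replicate k)"
    using Ham_0_k_subset_constants by blast
  with assms show "OMaj k P = P"
    by (intro subset_antisym OMaj_subset_of_constants subset_OMaj) simp_all
next
  fix S assume S: "S \<subseteq> {0..k} \<and> S - {0, k} \<noteq> {} \<and> P = Ham k S"
  then have "S \<subseteq> {0..k}" and "P = Ham k S" by auto
  obtain s where s: "s \<in> S" "0 < s" "s < k" using S by force
  show "OMaj k P = Ham k {w. w \<le> k \<and> 2 * int (Min S) - int k + 1 \<le> int w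
                                   \<and> int w \<le> 2 * int (Max S) - 1}"
    unfolding \<open>P = Ham k S\<close>
    using OMaj_Ham_subset[OF \<open>S \<subseteq> {0..k}\<close> s] Ham_subset_OMaj[OF \<open>S \<subseteq> {0..k}\<close> s]
    by (rule subset_antisym)
qed

end
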